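(* Let $v:M\to\mathbb R\cup\{+\infty\}$ be lower semicontinuous and a BJ solution of $H(x,Dv,v)=0$ in $M$. If $v(z)\in\mathbb R$ for some $z\in M$, then $v$ is real-valued and Lipschitz continuous on $M$.
   Context: $M$ is a connected, closed smooth Riemannian manifold, and $|\cdot|$ denotes the induced norms on the fibers of $T^*M$. $H:T^*M\times\mathbb R\to\mathbb R$ satisfies: (H1) $H$ is continuous. (H2) For every $R>0$ there is $K>0$ with $H(x,p,u)>R$ whenever $|u|\le R$ and $|p|\ge K$. (H3) $p\mapsto H(x,p,u)$ is convex on $T^*_xM$ for each $(x,u)$. (H4) There is $\Lambda>0$ with $|H(x,p,u)-H(x,p,v)|\le\Lambda|u-v|$ for all $(x,p)$ and $u,v\in\mathbb R$. A lower semicontinuous $v:M\to\mathbb R\cup\{+\infty\}$ is a BJ solution of $H(x,Dv,v)=0$ in $M$ if, whenever $\phi\in C^1(M,\mathbb R)$ and $v-\phi$ attains its minimum at $x$, one has $H(x,D\phi(x),v(x))=0$. *)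

theory Defs
  imports "HOL-Analysis.Analysis" "HOL-Library.Extended_Real"
begin

text \<open>A closed Riemannian manifold is modelled (via the Nash embedding theorem) as a
compact, connected, boundaryless smooth embedded submanifold M of a Euclidean space,
carrying the induced metric.  Cotangent vectors are identified with tangent vectors
through the metric.\<close>

fun Ck_on :: "nat \<Rightarrow> 'a::euclidean_space set \<Rightarrow> ('a \<Rightarrow> 'b::real_normed_vector) \<Rightarrow> bool" where
  "Ck_on 0 S f = continuous_on S f"
| "Ck_on (Suc k) S f =
     (\<exists>f'. (\<forall>x\<in>S. (f has_derivative f' x) (at x)) \<and> (\<forall>w. Ck_on k S (\<lambda>x. f' x w)))"

definition smooth_on :: "'a::euclidean_space set \<Rightarrow> ('a \<Rightarrow> 'b::real_normed_vector) \<Rightarrow> bool" where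
  "smooth_on S f \<longleftrightarrow> (\<forall>k. Ck_on k S f)"

definition smooth_submanifold :: "'a::euclidean_space set \<Rightarrow> bool" where
  "smooth_submanifold M \<longleftrightarrow>
     (\<forall>x\<in>M. \<exists>U V (\<phi>::'a\<Rightarrow>'a) (\<psi>::'a\<Rightarrow>'a) L. open U \<and> open V \<and> x \<in> U \<and> subspace L \<and>
        smooth_on U \<phi> \<and> smooth_on V \<psi> \<and> \<phi> ` U = V \<and>
        (\<forall>y\<in>U. \<psi> (\<phi> y) = y) \<and> (\<forall>y\<in>V. \<phi> (\<psi> y) = y) \<and>
        \<phi> ` (M \<inter> U) = L \<inter> V)"

definition closed_riemannian_manifold :: "'a::euclidean_space set \<Rightarrow> bool" where
  "closed_riemannian_manifold M \<longleftrightarrow>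
     M \<noteq> {} \<and> compact M \<and> connected M \<and> smooth_submanifold M"

definition tangent_space :: "'a::euclidean_space set \<Rightarrow> 'a \<Rightarrow> 'a set" where
  "tangent_space M x = {w. \<exists>\<gamma> e. e > 0 \<and> \<gamma> ` {-e<..<e} \<subseteq> M \<and> \<gamma> 0 = x \<and>
        (\<gamma> has_vector_derivative w) (at 0)}"

text \<open>Differential of (the restriction to M of) \<Phi> at x, as an element of the cotangent
space identified with the tangent space.\<close>
definition mdiff :: "'a::euclidean_space set \<Rightarrow> ('a \<Rightarrow> real) \<Rightarrow> 'a \<Rightarrow> 'a" where
  "mdiff M \<Phi> x = (THE p. p \<in> tangent_space M x \<and>
        (\<forall>w\<in>tangent_space M x. frechet_derivative \<Phi> (at x) w = p \<bullet> w))"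

definition lsc_on :: "'a::metric_space set \<Rightarrow> ('a \<Rightarrow> ereal) \<Rightarrow> bool" where
  "lsc_on M v \<longleftrightarrow> (\<forall>x\<in>M. \<forall>t. t < v x \<longrightarrow> (\<exists>e>0. \<forall>y\<in>M. dist y x < e \<longrightarrow> t < v y))"

text \<open>BJ (Barron--Jensen) solution of H(x,Dv,v)=0 in M.  The test functions are C^1
functions \<Phi> on an open neighbourhood of M; D\<phi>(x) is their differential along M.\<close>
definition BJ_solution ::
  "'a::euclidean_space set \<Rightarrow> ('a \<Rightarrow> 'a \<Rightarrow> real \<Rightarrow> real) \<Rightarrow> ('a \<Rightarrow> ereal) \<Rightarrow> bool" where
  "BJ_solution M H v \<longleftrightarrow>
     lsc_on M v \<and> (\<forall>x\<in>M. v x \<noteq> -\<infinity>) \<and>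
     (\<forall>U \<Phi> x. open U \<and> M \<subseteq> U \<and> Ck_on 1 U \<Phi> \<and> x \<in> M \<and> v x \<noteq> \<infinity> \<and>
        (\<forall>y\<in>M. v x - ereal (\<Phi> x) \<le> v y - ereal (\<Phi> y)) \<longrightarrow>
        H x (mdiff M \<Phi> x) (real_of_ereal (v x)) = 0)"

end

theory Submission
  imports Defs
begin

text \<open>
  Convexity and coercivity in \<open>p\<close>, together with the Lipschitz dependence on \<open>u\<close>, force
  \<open>norm p \<le> A + B * \<bar>u\<bar>\<close> whenever \<open>H x p u = 0\<close>. Suppose \<open>v y1 = b\<close> is finite and let
  \<open>y2\<close> be close to \<open>y1\<close>. Minimize \<open>v + C * sqrt (norm (y - y2)\<^sup>2 + \<epsilon>\<^sup>2)\<close> over \<open>M\<close> with a large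
  constant \<open>C\<close> depending on \<open>\<bar>b\<bar>\<close>. Since chords of a compact submanifold are uniformly close
  to tangent vectors, at a minimum point farther than \<open>\<epsilon>\<close> from \<open>y2\<close> the test function has a
  tangential gradient of size about \<open>C\<close>, which the BJ property rules out. So the minimum lies
  near \<open>y2\<close>, and lower semicontinuity gives \<open>v y2 \<le> b + C * norm (y1 - y2)\<close> as \<open>\<epsilon> \<rightarrow> 0\<close>.
  This one-sided local estimate propagates finiteness over the connected manifold. Compactness
  then bounds \<open>v\<close>, and the estimate becomes a global Lipschitz bound.
\<close>

section \<open>Semicontinuity and metric lemmas\<close>

lemma lsc_on_attains_min:
  fixes f :: "'a::metric_space \<Rightarrow> ereal"
  assumes "lsc_on S f" "compact S" "S \<noteq> {}"
  obtains m where "m \<in> S" "\<And>y. y \<in> S \<Longrightarrow> f m \<le> f y"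
proof -
  have False if no_min: "\<forall>m\<in>S. \<exists>y\<in>S. f y < f m"
  proof -
    obtain Y where Y: "\<forall>m\<in>S. Y m \<in> S \<and> f (Y m) < f m" using no_min by metis
    have "\<forall>m\<in>S. \<exists>e>0. \<forall>y\<in>S. dist y m < e \<longrightarrow> f (Y m) < f y"
      using assms(1) Y unfolding lsc_on_def by blast
    then obtain E where E: "\<forall>m\<in>S. E m > 0 \<and> (\<forall>y\<in>S. dist y m < E m \<longrightarrow> f (Y m) < f y)"
      by metis
    have "S \<subseteq> (\<Union>m\<in>S. ball m (E m))" using E by force
    then obtain K where K: "K \<subseteq> S" "finite K" "S \<subseteq> (\<Union>m\<in>K. ball m (E m))"
      using compactE_image[OF assms(2), of S "\<lambda>m. ball m (E m)"] by blast
    have "K \<noteq> {}" using K(3) assms(3) by auto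
    define j where "j = arg_min_on (f \<circ> Y) K"
    have j: "j \<in> K" "\<And>k. k \<in> K \<Longrightarrow> f (Y j) \<le> f (Y k)"
      using arg_min_if_finite[OF K(2) \<open>K \<noteq> {}\<close>, of "f \<circ> Y"] unfolding j_def by (auto simp: not_less)
    have "Y j \<in> S" using j(1) K(1) Y by blast
    then obtain i where i: "i \<in> K" "dist i (Y j) < E i" using K(3) by auto
    then have "f (Y i) < f (Y j)" using E K(1) \<open>Y j \<in> S\<close> by (auto simp: dist_commute)
    with j(2)[OF i(1)] show False by simp
  qed
  then obtain m where "m \<in> S" "\<forall>y\<in>S. \<not> f y < f m" by blast
  then show ?thesis by (intro that) (auto simp: not_less)
qed

lemma lsc_on_diff_continuous:
  fixes v :: "'a::metric_space \<Rightarrow> ereal"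
  assumes lsc: "lsc_on S v" and g: "continuous_on S g" and finite: "\<And>y. y \<in> S \<Longrightarrow> v y \<noteq> -\<infinity>"
  shows "lsc_on S (\<lambda>y. v y - ereal (g y))"
  unfolding lsc_on_def
proof (intro ballI allI impI)
  fix x t assume x: "x \<in> S" and t: "t < v x - ereal (g x)"
  show "\<exists>e>0. \<forall>y\<in>S. dist y x < e \<longrightarrow> t < v y - ereal (g y)"
  proof (cases t)
    case MInf
    then have "t < v y - ereal (g y)" if "y \<in> S" for y using finite[OF that] by (cases "v y") auto
    then show ?thesis by (intro exI[of _ 1]) auto
  next
    case PInf
    then show ?thesis using t by auto
  next
    case (real \<tau>)
    then have "ereal (\<tau> + g x) < v x" using t by (cases "v x") auto
    then obtain \<sigma> where \<sigma>: "\<tau> + g x < \<sigma>" "ereal \<sigma> < v x" using ereal_dense2 by force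
    obtain e1 where e1: "e1 > 0" "\<forall>y\<in>S. dist y x < e1 \<longrightarrow> ereal \<sigma> < v y"
      using lsc x \<sigma>(2) unfolding lsc_on_def by blast
    obtain e2 where e2: "e2 > 0" "\<forall>y\<in>S. dist y x < e2 \<longrightarrow> dist (g y) (g x) < \<sigma> - \<tau> - g x"
      using g x \<sigma>(1) unfolding continuous_on_iff by (metis diff_gt_0_iff_gt diff_diff_eq)
    have "t < v y - ereal (g y)" if "y \<in> S" "dist y x < min e1 e2" for y
    proof -
      have "ereal \<sigma> < v y" "g y < \<sigma> - \<tau>" using e1 e2 that by (auto simp: dist_real_def abs_less_iff)
      then show ?thesis using real by (cases "v y") auto
    qed
    then show ?thesis using e1(1) e2(1) by (intro exI[of _ "min e1 e2"]) auto
  qed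
qed

lemma compact_locally_bounded_above:
  fixes f :: "'a::metric_space \<Rightarrow> real"
  assumes S: "compact S" and \<delta>: "\<delta> > 0" and loc: "\<And>x. x \<in> S \<Longrightarrow> \<exists>c. \<forall>y\<in>S. dist x y < \<delta> \<longrightarrow> f y \<le> c"
  obtains B where "\<And>y. y \<in> S \<Longrightarrow> f y \<le> B"
proof -
  from loc have "\<forall>x\<in>S. \<exists>c. \<forall>y\<in>S. dist x y < \<delta> \<longrightarrow> f y \<le> c" by blast
  from bchoice[OF this] obtain c where c: "\<forall>x\<in>S. \<forall>y\<in>S. dist x y < \<delta> \<longrightarrow> f y \<le> c x" ..
  have "S \<subseteq> (\<Union>x\<in>S. ball x \<delta>)" using \<delta> by force
  then obtain K where K: "K \<subseteq> S" "finite K" "S \<subseteq> (\<Union>x\<in>K. ball x \<delta>)"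
    using compactE_image[OF S, of S "\<lambda>x. ball x \<delta>"] by blast
  have "f y \<le> (\<Sum>k\<in>K. \<bar>c k\<bar>)" if y: "y \<in> S" for y
  proof -
    obtain k where k: "k \<in> K" "dist k y < \<delta>" using K(3) y by auto
    then have "f y \<le> \<bar>c k\<bar>" using c K(1) y by force
    also have "\<dots> \<le> (\<Sum>k\<in>K. \<bar>c k\<bar>)" using K(2) k(1) by (intro member_le_sum) auto
    finally show ?thesis .
  qed
  then show ?thesis by (rule that)
qed

lemma lipschitz_on_if_locally_lipschitz_bounded:
  fixes f :: "'a::metric_space \<Rightarrow> real"
  assumes \<delta>: "\<delta> > 0" and L: "0 \<le> L" and B: "0 \<le> B" "\<And>y. y \<in> S \<Longrightarrow> \<bar>f y\<bar> \<le> B"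
    and loc: "\<And>x y. x \<in> S \<Longrightarrow> y \<in> S \<Longrightarrow> dist x y \<le> \<delta> \<Longrightarrow> \<bar>f x - f y\<bar> \<le> L * dist x y"
  shows "(L + 2 * B / \<delta>)-lipschitz_on S f"
proof (rule lipschitz_onI)
  fix x y assume x: "x \<in> S" and y: "y \<in> S"
  show "dist (f x) (f y) \<le> (L + 2 * B / \<delta>) * dist x y"
  proof (cases "dist x y \<le> \<delta>")
    case True
    then have "dist (f x) (f y) \<le> L * dist x y" using loc x y by (simp add: dist_real_def)
    also have "\<dots> \<le> (L + 2 * B / \<delta>) * dist x y" using B \<delta> by (intro mult_right_mono) auto
    finally show ?thesis .
  next
    case False
    have "dist (f x) (f y) \<le> 2 * B" using B(2)[OF x] B(2)[OF y] by (simp add: dist_real_def abs_le_iff)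
    also have "\<dots> = 2 * B / \<delta> * \<delta>" using \<delta> by simp
    also have "\<dots> \<le> (L + 2 * B / \<delta>) * dist x y" using False B L \<delta> by (intro mult_mono) auto
    finally show ?thesis .
  qed
qed (use L B \<delta> in simp)

lemma connected_induction_dist:
  fixes P :: "'a::metric_space \<Rightarrow> bool"
  assumes "connected S" "\<delta> > 0" "z \<in> S" "P z" "x \<in> S"
    and step: "\<And>x y. x \<in> S \<Longrightarrow> y \<in> S \<Longrightarrow> dist x y \<le> \<delta> \<Longrightarrow> P x \<Longrightarrow> P y"
  shows "P x"
proof (rule connected_induction_simple[OF assms(1,3,5), where P = P])
  fix a assume "a \<in> S"
  show "\<exists>T. openin (top_of_set S) T \<and> a \<in> T \<and> (\<forall>x\<in>T. \<forall>y\<in>T. P x \<longrightarrow> P y)"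
  proof (intro exI conjI ballI impI)
    show "openin (top_of_set S) (S \<inter> ball a (\<delta> / 2))" by (simp add: openin_open_Int)
    show "a \<in> S \<inter> ball a (\<delta> / 2)" using \<open>a \<in> S\<close> \<open>\<delta> > 0\<close> by simp
    fix x y assume x: "x \<in> S \<inter> ball a (\<delta> / 2)" and y: "y \<in> S \<inter> ball a (\<delta> / 2)" and "P x"
    have "dist x y \<le> \<delta>" using x y dist_triangle_half_l[of x a \<delta> y] by (simp add: dist_commute)
    then show "P y" using step x y \<open>P x\<close> by blast
  qed
qed (rule assms(4))

lemma lipschitz_on_if_local_upper_bound:
  fixes f :: "'a::metric_space \<Rightarrow> real"
  assumes S: "compact S" and lower: "\<And>x. x \<in> S \<Longrightarrow> \<mu> \<le> f x" and \<delta>: "\<delta> > 0"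
    and local: "\<And>\<beta>. \<exists>C\<ge>0. \<forall>x\<in>S. \<forall>y\<in>S. \<bar>f x\<bar> \<le> \<beta> \<longrightarrow> dist x y \<le> \<delta> \<longrightarrow> f y \<le> f x + C * dist x y"
  shows "\<exists>L\<ge>0. L-lipschitz_on S f"
proof -
  have "\<exists>c. \<forall>y\<in>S. dist x y < \<delta> \<longrightarrow> f y \<le> c" if x: "x \<in> S" for x
  proof -
    obtain C where C: "C \<ge> 0" "\<forall>y\<in>S. dist x y \<le> \<delta> \<longrightarrow> f y \<le> f x + C * dist x y"
      using local[of "\<bar>f x\<bar>"] x by blast
    have "f y \<le> f x + C * \<delta>" if "y \<in> S" "dist x y < \<delta>" for y
      using C(2) that mult_left_mono[of "dist x y" \<delta> C] C(1) by force
    then show ?thesis by blast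
  qed
  then obtain Bu where Bu: "\<And>y. y \<in> S \<Longrightarrow> f y \<le> Bu"
    using compact_locally_bounded_above[OF S \<delta>] by blast
  define B where "B = \<bar>Bu\<bar> + \<bar>\<mu>\<bar>"
  have B: "0 \<le> B" "\<And>y. y \<in> S \<Longrightarrow> \<bar>f y\<bar> \<le> B"
    using Bu lower unfolding B_def by (force simp: abs_le_iff)+
  obtain L where L: "L \<ge> 0" "\<forall>x\<in>S. \<forall>y\<in>S. \<bar>f x\<bar> \<le> B \<longrightarrow> dist x y \<le> \<delta> \<longrightarrow> f y \<le> f x + L * dist x y"
    using local by blast
  have "\<bar>f x - f y\<bar> \<le> L * dist x y" if "x \<in> S" "y \<in> S" "dist x y \<le> \<delta>" for x y
  proof -
    have "f y \<le> f x + L * dist x y" using L(2) B(2) that by blast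
    moreover have "f x \<le> f y + L * dist x y" using L(2) B(2) that by (metis dist_commute)
    ultimately show ?thesis by linarith
  qed
  then have "(L + 2 * B / \<delta>)-lipschitz_on S f"
    using lipschitz_on_if_locally_lipschitz_bounded[where S = S and f = f, OF \<delta> L(1) B] by blast
  then show ?thesis using lipschitz_on_nonneg by blast
qed

lemma ereal_lipschitz_if_local_upper_bound:
  fixes v :: "'a::metric_space \<Rightarrow> ereal"
  assumes M: "compact M" "connected M" and z: "z \<in> M" "v z \<noteq> \<infinity>"
    and lower: "\<And>x. x \<in> M \<Longrightarrow> ereal \<mu> \<le> v x" and \<delta>: "\<delta> > 0"
    and local: "\<And>\<beta>. \<exists>C\<ge>0. \<forall>x\<in>M. \<forall>y\<in>M. \<forall>b. \<bar>b\<bar> \<le> \<beta> \<longrightarrow> v x = ereal b \<longrightarrow> dist x y \<le> \<delta> \<longrightarrow>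
                  v y \<le> ereal (b + C * dist x y)"
  shows "(\<forall>x\<in>M. v x \<noteq> \<infinity>) \<and> (\<exists>L\<ge>0. L-lipschitz_on M (\<lambda>x. real_of_ereal (v x)))"
proof -
  have near: "v y \<noteq> \<infinity>" if xy: "x \<in> M" "y \<in> M" "dist x y \<le> \<delta>" and fin: "v x \<noteq> \<infinity>" for x y
  proof -
    obtain b where b: "v x = ereal b" using fin lower[OF xy(1)] by (cases "v x") auto
    obtain C where "\<forall>x\<in>M. \<forall>y\<in>M. \<forall>b'. \<bar>b'\<bar> \<le> \<bar>b\<bar> \<longrightarrow> v x = ereal b' \<longrightarrow> dist x y \<le> \<delta> \<longrightarrow>
        v y \<le> ereal (b' + C * dist x y)" using local by blast
    then have "v y \<le> ereal (b + C * dist x y)" using xy b by blast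
    then show ?thesis by auto
  qed
  have finite: "\<forall>x\<in>M. v x \<noteq> \<infinity>"
    using connected_induction_dist[OF M(2) \<delta> z(1), of "\<lambda>x. v x \<noteq> \<infinity>"] z(2) near by blast
  define f where "f x = real_of_ereal (v x)" for x
  have vf: "v x = ereal (f x)" if "x \<in> M" for x
    using finite lower[OF that] that unfolding f_def by (cases "v x") auto
  have "\<exists>C\<ge>0. \<forall>x\<in>M. \<forall>y\<in>M. \<bar>f x\<bar> \<le> \<beta> \<longrightarrow> dist x y \<le> \<delta> \<longrightarrow> f y \<le> f x + C * dist x y" for \<beta>
  proof -
    obtain C where C: "C \<ge> 0" "\<forall>x\<in>M. \<forall>y\<in>M. \<forall>b. \<bar>b\<bar> \<le> \<beta> \<longrightarrow> v x = ereal b \<longrightarrow> dist x y \<le> \<delta> \<longrightarrow>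
        v y \<le> ereal (b + C * dist x y)" using local by blast
    have "f y \<le> f x + C * dist x y" if "x \<in> M" "y \<in> M" "\<bar>f x\<bar> \<le> \<beta>" "dist x y \<le> \<delta>" for x y
      using C(2) vf that by (metis ereal_less_eq(3))
    then show ?thesis using C(1) by blast
  qed
  moreover have "\<mu> \<le> f x" if "x \<in> M" for x using lower[OF that] vf[OF that] by simp
  ultimately have "\<exists>L\<ge>0. L-lipschitz_on M f"
    using lipschitz_on_if_local_upper_bound[OF M(1) _ \<delta>] by blast
  then show ?thesis using finite unfolding f_def by blast
qed

section \<open>Slice charts and tangent spaces\<close>

lemma isCont_eventually_in_open:
  "isCont f x \<Longrightarrow> open S \<Longrightarrow> f x \<in> S \<Longrightarrow> \<forall>\<^sub>F y in nhds x. f y \<in> S"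
  by (simp add: isCont_def tendsto_at_iff_tendsto_nhds topological_tendstoD)

lemma has_derivative_left_inverse:
  assumes "open U" "x \<in> U" "\<And>y. y \<in> U \<Longrightarrow> g (f y) = y"
    and f': "(f has_derivative f') (at x)" and g': "(g has_derivative g') (at (f x))"
  shows "g' (f' h) = h"
proof -
  have "((g \<circ> f) has_derivative (g' \<circ> f')) (at x)" using diff_chain_at[OF f' g'] .
  then have "(id has_derivative (g' \<circ> f')) (at x)"
    by (rule has_derivative_transform_within_open[OF _ assms(1,2)]) (use assms(3) in auto)
  then have "g' \<circ> f' = id" using has_derivative_id has_derivative_unique by blast
  then show ?thesis by (metis comp_apply id_apply)
qed

lemma has_vector_derivative_in_subspace:
  fixes \<gamma> :: "real \<Rightarrow> 'a::euclidean_space"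
  assumes L: "subspace L" and \<gamma>': "(\<gamma> has_vector_derivative u) (at t)"
    and near: "\<forall>\<^sub>F s in nhds t. \<gamma> s \<in> L"
  shows "u \<in> L"
proof -
  obtain y z where yL: "y \<in> L" and zL: "\<And>x. x \<in> L \<Longrightarrow> z \<bullet> x = 0" and u: "u = y + z"
    using orthogonal_subspace_decomp_exists[of L u]
    unfolding span_eq_iff[THEN iffD2, OF L] orthogonal_def by blast
  obtain d where d: "d > 0" "\<And>s. dist s t < d \<Longrightarrow> \<gamma> s \<in> L"
    using near unfolding eventually_nhds_metric by blast
  have "((\<lambda>s. z \<bullet> \<gamma> s) has_real_derivative z \<bullet> u) (at t)"
    using bounded_linear.has_vector_derivative[OF bounded_linear_inner_right \<gamma>']
    by (simp add: has_real_derivative_iff_has_vector_derivative)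
  moreover have "\<forall>s. \<bar>t - s\<bar> < d \<longrightarrow> z \<bullet> \<gamma> t = z \<bullet> \<gamma> s"
    using d zL by (simp add: dist_real_def abs_minus_commute)
  ultimately have "z \<bullet> u = 0" using DERIV_local_const d(1) by blast
  then have "z \<bullet> z = 0" using u zL[OF yL] by (simp add: inner_add_right inner_commute)
  then show "u \<in> L" using u yL by simp
qed

lemma smooth_on_C1_blinfun:
  fixes f :: "'a::euclidean_space \<Rightarrow> 'b::real_normed_vector"
  assumes "smooth_on U f"
  obtains f' :: "'a \<Rightarrow> 'a \<Rightarrow>\<^sub>L 'b"
  where "\<And>x. x \<in> U \<Longrightarrow> (f has_derivative f' x) (at x)" "continuous_on U f'"
proof -
  have "Ck_on (Suc 0) U f" using assms unfolding smooth_on_def by blast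
  then obtain d where d: "\<forall>x\<in>U. (f has_derivative d x) (at x)" "\<And>w. continuous_on U (\<lambda>x. d x w)"
    by (auto simp del: One_nat_def)
  have d_eq: "blinfun_apply (Blinfun (d x)) = d x" if "x \<in> U" for x
    using d(1) that by (meson bounded_linear_Blinfun_apply has_derivative_bounded_linear)
  have "continuous_on U (\<lambda>x. Blinfun (d x))"
    by (rule continuous_on_blinfun_componentwise, rule continuous_on_cong[THEN iffD1, OF refl _ d(2)])
      (simp add: d_eq)
  then show ?thesis using d(1) d_eq by (intro that[of "\<lambda>x. Blinfun (d x)"]) auto
qed

lemma C1_uniform_linearization:
  fixes f :: "'a::real_normed_vector \<Rightarrow> 'b::real_normed_vector" and f' :: "'a \<Rightarrow> 'a \<Rightarrow>\<^sub>L 'b"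
  assumes V: "open V" "q0 \<in> V" and f': "\<And>q. q \<in> V \<Longrightarrow> (f has_derivative f' q) (at q)"
    and cont: "continuous_on V f'" and \<eta>: "\<eta> > 0"
  obtains \<rho> where "\<rho> > 0" "cball q0 \<rho> \<subseteq> V"
    "\<And>q1 q2. q1 \<in> cball q0 \<rho> \<Longrightarrow> q2 \<in> cball q0 \<rho> \<Longrightarrow>
       norm (f q2 - f q1 - f' q1 (q2 - q1)) \<le> \<eta> * norm (q2 - q1)"
proof -
  obtain \<rho>1 where \<rho>1: "\<rho>1 > 0" "\<And>q. q \<in> V \<Longrightarrow> dist q q0 < \<rho>1 \<Longrightarrow> dist (f' q) (f' q0) < \<eta> / 2"
    using cont V(2) \<eta> unfolding continuous_on_iff by (metis half_gt_zero)
  obtain \<rho>2 where \<rho>2: "\<rho>2 > 0" "ball q0 \<rho>2 \<subseteq> V" using V openE by blast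
  define \<rho> where "\<rho> = min \<rho>1 \<rho>2 / 2"
  have \<rho>: "\<rho> > 0" "cball q0 \<rho> \<subseteq> V" "\<And>q. q \<in> cball q0 \<rho> \<Longrightarrow> dist (f' q) (f' q0) < \<eta> / 2"
    using \<rho>1 \<rho>2 by (auto simp: \<rho>_def subset_eq dist_commute)
  have "norm (f q2 - f q1 - f' q1 (q2 - q1)) \<le> \<eta> * norm (q2 - q1)"
    if q: "q1 \<in> cball q0 \<rho>" "q2 \<in> cball q0 \<rho>" for q1 q2
  proof -
    have "norm (f q2 - f q1 - f' q1 (q2 - q1)) \<le> norm (q2 - q1) * \<eta>"
    proof (rule differentiable_bound_linearization[where S = "cball q0 \<rho>"])
      fix t :: real assume "t \<in> {0..1}"
      then have "(1 - t) *\<^sub>R q1 + t *\<^sub>R q2 \<in> cball q0 \<rho>"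
        using convex_cball[of q0 \<rho>] q unfolding convex_alt by auto
      then show "q1 + t *\<^sub>R (q2 - q1) \<in> cball q0 \<rho>" by (simp add: algebra_simps)
    next
      fix x assume "x \<in> cball q0 \<rho>"
      then show "(f has_derivative f' x) (at x within cball q0 \<rho>)"
        using f' \<rho>(2) has_derivative_at_withinI by blast
      have "norm (f' x - f' q1) \<le> dist (f' x) (f' q0) + dist (f' q1) (f' q0)"
        using dist_triangle2 by (metis dist_norm)
      also have "\<dots> \<le> \<eta>" using \<rho>(3)[OF \<open>x \<in> cball q0 \<rho>\<close>] \<rho>(3)[OF q(1)] by linarith
      finally show "onorm (blinfun_apply (f' x) - blinfun_apply (f' q1)) \<le> \<eta>"
        by (simp add: norm_blinfun.rep_eq blinfun.diff_left[abs_def] fun_diff_def)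
    qed (rule q(1))
    then show ?thesis by (simp add: mult.commute)
  qed
  then show ?thesis using \<rho>(1,2) that by blast
qed

lemma inner_ge_half_norms:
  fixes d w :: "'a::real_inner"
  assumes "norm (d - w) \<le> norm w / 4"
  shows "norm d * norm w / 2 \<le> d \<bullet> w"
proof -
  have "\<bar>(d - w) \<bullet> w\<bar> \<le> norm w / 4 * norm w"
    using Cauchy_Schwarz_ineq2[of "d - w" w] assms by (meson mult_right_mono norm_ge_zero order_trans)
  moreover have "d \<bullet> w = (norm w)\<^sup>2 + (d - w) \<bullet> w"
    by (simp add: inner_diff_left power2_norm_eq_inner)
  ultimately have "d \<bullet> w \<ge> 3 / 4 * (norm w)\<^sup>2"
    by (simp add: power2_eq_square abs_le_iff)
  moreover have "norm d * norm w \<le> (norm w + norm w / 4) * norm w"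
    using norm_triangle_sub[of d w] assms by (intro mult_right_mono) auto
  moreover have "(norm w + norm w / 4) * norm w = 5 / 4 * (norm w)\<^sup>2"
    by (simp add: power2_eq_square algebra_simps)
  ultimately show ?thesis using zero_le_power2[of "norm w"] by linarith
qed

locale C1_slice_chart =
  fixes M U V L :: "'a::euclidean_space set"
    and \<phi> \<psi> :: "'a \<Rightarrow> 'a" and \<phi>' \<psi>' :: "'a \<Rightarrow> 'a \<Rightarrow>\<^sub>L 'a"
  assumes open_U: "open U" and open_V: "open V" and subspace_L: "subspace L"
    and phi_image: "\<phi> ` U = V"
    and psi_phi: "\<And>y. y \<in> U \<Longrightarrow> \<psi> (\<phi> y) = y" and phi_psi: "\<And>q. q \<in> V \<Longrightarrow> \<phi> (\<psi> q) = q"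
    and slice: "\<phi> ` (M \<inter> U) = L \<inter> V"
    and phi_deriv: "\<And>y. y \<in> U \<Longrightarrow> (\<phi> has_derivative \<phi>' y) (at y)"
    and phi'_cont: "continuous_on U \<phi>'"
    and psi_deriv: "\<And>q. q \<in> V \<Longrightarrow> (\<psi> has_derivative \<psi>' q) (at q)"
    and psi'_cont: "continuous_on V \<psi>'"

lemma smooth_submanifold_chart:
  fixes M :: "'a::euclidean_space set"
  assumes "smooth_submanifold M" "x \<in> M"
  obtains U V L \<phi> \<psi> \<phi>' \<psi>' where "C1_slice_chart M U V L \<phi> \<psi> \<phi>' \<psi>'" "x \<in> U"
proof -
  have "\<exists>U V (\<phi>::'a\<Rightarrow>'a) (\<psi>::'a\<Rightarrow>'a) L. open U \<and> open V \<and> x \<in> U \<and> subspace L \<and>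
        smooth_on U \<phi> \<and> smooth_on V \<psi> \<and> \<phi> ` U = V \<and>
        (\<forall>y\<in>U. \<psi> (\<phi> y) = y) \<and> (\<forall>y\<in>V. \<phi> (\<psi> y) = y) \<and> \<phi> ` (M \<inter> U) = L \<inter> V"
    using assms unfolding smooth_submanifold_def by (rule bspec)
  then obtain U V L and \<phi> \<psi> :: "'a \<Rightarrow> 'a" where ch: "open U" "open V" "x \<in> U" "subspace L"
      "smooth_on U \<phi>" "smooth_on V \<psi>" "\<phi> ` U = V" "\<forall>y\<in>U. \<psi> (\<phi> y) = y" "\<forall>q\<in>V. \<phi> (\<psi> q) = q"
      "\<phi> ` (M \<inter> U) = L \<inter> V"
    by (elim exE conjE) blast
  obtain \<phi>' :: "'a \<Rightarrow> 'a \<Rightarrow>\<^sub>L 'a" where \<phi>': "\<And>y. y \<in> U \<Longrightarrow> (\<phi> has_derivative \<phi>' y) (at y)" "continuous_on U \<phi>'"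
    using smooth_on_C1_blinfun[OF ch(5)] by blast
  obtain \<psi>' :: "'a \<Rightarrow> 'a \<Rightarrow>\<^sub>L 'a" where \<psi>': "\<And>q. q \<in> V \<Longrightarrow> (\<psi> has_derivative \<psi>' q) (at q)" "continuous_on V \<psi>'"
    using smooth_on_C1_blinfun[OF ch(6)] by blast
  have "C1_slice_chart M U V L \<phi> \<psi> \<phi>' \<psi>'"
    by unfold_locales (use ch \<phi>' \<psi>' in auto)
  then show ?thesis using ch(3) by (rule that)
qed

context C1_slice_chart
begin

lemma psi'_phi':
  assumes "y \<in> U" shows "\<psi>' (\<phi> y) (\<phi>' y h) = h"
proof -
  have "\<phi> y \<in> V" using phi_image assms by blast
  then show ?thesis
    using has_derivative_left_inverse[OF open_U assms psi_phi phi_deriv[OF assms]] psi_deriv by blast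
qed

lemma phi'_psi':
  assumes "q \<in> V" shows "\<phi>' (\<psi> q) (\<psi>' q h) = h"
proof -
  have "\<psi> q \<in> U" using phi_image psi_phi assms by force
  then show ?thesis
    using has_derivative_left_inverse[OF open_V assms phi_psi psi_deriv[OF assms]] phi_deriv by blast
qed

lemma phi_slice: "y \<in> M \<Longrightarrow> y \<in> U \<Longrightarrow> \<phi> y \<in> L \<inter> V"
  using slice by blast

lemma tangent_space_subset:
  assumes m: "m \<in> M" "m \<in> U"
  shows "tangent_space M m \<subseteq> \<psi>' (\<phi> m) ` L"
proof
  fix w assume "w \<in> tangent_space M m"
  then obtain \<gamma> e where \<gamma>: "e > 0" "\<gamma> ` {-e<..<e} \<subseteq> M" "\<gamma> 0 = m"
      "(\<gamma> has_vector_derivative w) (at 0)"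
    unfolding tangent_space_def by blast
  have "\<forall>\<^sub>F t in nhds 0. \<gamma> t \<in> U"
    using \<gamma>(3,4) m(2) open_U
    by (intro isCont_eventually_in_open has_vector_derivative_continuous) auto
  moreover have "\<forall>\<^sub>F t in nhds 0. t \<in> {-e<..<e}"
    using \<gamma>(1) by (intro eventually_nhds_in_open) auto
  ultimately have "\<forall>\<^sub>F t in nhds 0. (\<phi> \<circ> \<gamma>) t \<in> L"
    by eventually_elim (use \<gamma>(2) phi_slice in \<open>auto simp: image_subset_iff\<close>)
  moreover have "(\<phi> has_derivative \<phi>' m) (at (\<gamma> 0) within range \<gamma>)"
    using phi_deriv[OF m(2)] \<gamma>(3) by (simp add: has_derivative_at_withinI)
  then have "((\<phi> \<circ> \<gamma>) has_vector_derivative \<phi>' m w) (at 0)"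
    by (rule vector_derivative_diff_chain_within[OF \<gamma>(4)])
  ultimately have "\<phi>' m w \<in> L" by (intro has_vector_derivative_in_subspace[OF subspace_L])
  then show "w \<in> \<psi>' (\<phi> m) ` L" using psi'_phi'[OF m(2)] by (metis image_eqI)
qed

lemma subset_tangent_space:
  assumes m: "m \<in> M" "m \<in> U"
  shows "\<psi>' (\<phi> m) ` L \<subseteq> tangent_space M m"
proof
  have qm: "\<phi> m \<in> L \<inter> V" using phi_slice m .
  fix w assume "w \<in> \<psi>' (\<phi> m) ` L"
  then obtain e where e: "e \<in> L" "w = \<psi>' (\<phi> m) e" by blast
  define c where "c t = \<phi> m + t *\<^sub>R e" for t :: real
  have "\<forall>\<^sub>F t in nhds 0. c t \<in> V"
    using qm open_V unfolding c_def by (intro isCont_eventually_in_open continuous_intros) auto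
  then obtain d where d: "d > 0" "\<And>t. dist t 0 < d \<Longrightarrow> c t \<in> V"
    unfolding eventually_nhds_metric by blast
  have "(\<psi> \<circ> c) t \<in> M" if "t \<in> {-d<..<d}" for t
  proof -
    have "c t \<in> L \<inter> V"
      using d that qm e(1) subspace_L by (auto simp: c_def subspace_add subspace_scale dist_real_def)
    then obtain y where "y \<in> M \<inter> U" "\<phi> y = c t" using slice by (metis imageE)
    then show ?thesis using psi_phi by (metis IntD1 IntD2 comp_apply)
  qed
  moreover have "(\<psi> \<circ> c) 0 = m" using psi_phi m by (simp add: c_def)
  moreover have "((\<psi> \<circ> c) has_vector_derivative w) (at 0)"
  proof -
    have "(c has_vector_derivative e) (at 0)"
      unfolding c_def by (auto intro!: derivative_eq_intros)
    moreover have "(\<psi> has_derivative \<psi>' (c 0)) (at (c 0) within range c)"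
      using psi_deriv qm by (simp add: c_def has_derivative_at_withinI)
    ultimately have "((\<psi> \<circ> c) has_vector_derivative \<psi>' (c 0) e) (at 0)"
      by (rule vector_derivative_diff_chain_within)
    then show ?thesis using e(2) by (simp add: c_def)
  qed
  ultimately show "w \<in> tangent_space M m"
    unfolding tangent_space_def using d(1) by blast
qed

lemma tangent_space_eq: "m \<in> M \<Longrightarrow> m \<in> U \<Longrightarrow> tangent_space M m = \<psi>' (\<phi> m) ` L"
  using tangent_space_subset subset_tangent_space by (rule subset_antisym)

lemma subspace_tangent_space: "m \<in> M \<Longrightarrow> m \<in> U \<Longrightarrow> subspace (tangent_space M m)"
  using tangent_space_eq subspace_L
  by (simp add: linear_subspace_image bounded_linear.linear[OF blinfun.bounded_linear_right])

text \<open>The linearization of \<open>\<psi>\<close> at \<open>\<phi> m\<close> maps \<open>\<phi> y - \<phi> m\<close> to a tangent vector \<open>w\<close>. The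
  linearization error is a small multiple of \<open>norm (\<phi> y - \<phi> m)\<close>, and this norm is at most
  \<open>P * norm w\<close> because \<open>\<phi>' m\<close> inverts \<open>\<psi>' (\<phi> m)\<close>.\<close>

lemma chord_near_tangent:
  assumes x0: "x0 \<in> M" "x0 \<in> U"
  shows "\<exists>r>0. \<forall>m\<in>M \<inter> ball x0 r. \<forall>y\<in>M \<inter> ball x0 r.
           \<exists>w\<in>tangent_space M m. norm (y - m - w) \<le> norm w / 4"
proof -
  obtain r0 where r0: "r0 > 0" "cball x0 r0 \<subseteq> U"
    using open_U x0(2) open_contains_cball by blast
  have "bounded (\<phi>' ` cball x0 r0)"
    using phi'_cont r0(2) by (intro compact_imp_bounded compact_continuous_image compact_cball)
      (rule continuous_on_subset)
  then obtain P where P: "P > 0" "\<And>y. y \<in> cball x0 r0 \<Longrightarrow> norm (\<phi>' y) \<le> P"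
    unfolding bounded_pos by blast
  have q0: "\<phi> x0 \<in> V" using phi_image x0(2) by blast
  obtain \<rho> where \<rho>: "\<rho> > 0" "cball (\<phi> x0) \<rho> \<subseteq> V"
      "\<And>q1 q2. q1 \<in> cball (\<phi> x0) \<rho> \<Longrightarrow> q2 \<in> cball (\<phi> x0) \<rho> \<Longrightarrow>
         norm (\<psi> q2 - \<psi> q1 - \<psi>' q1 (q2 - q1)) \<le> 1 / (4 * P) * norm (q2 - q1)"
    using C1_uniform_linearization[OF open_V q0 psi_deriv psi'_cont, of "1 / (4 * P)"] P(1) by auto
  have "isCont \<phi> x0" using phi_deriv x0(2) has_derivative_continuous by blast
  then obtain d where d: "d > 0" "\<And>y. dist y x0 < d \<Longrightarrow> dist (\<phi> y) (\<phi> x0) < \<rho>"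
    using \<rho>(1) unfolding continuous_at_eps_delta by blast
  have "\<exists>w\<in>tangent_space M m. norm (y - m - w) \<le> norm w / 4"
    if m: "m \<in> M" "m \<in> ball x0 (min r0 d)" and y: "y \<in> M" "y \<in> ball x0 (min r0 d)" for m y
  proof -
    have U: "m \<in> U" "y \<in> U" using m y r0 by (auto simp: subset_eq)
    have cb: "\<phi> m \<in> cball (\<phi> x0) \<rho>" "\<phi> y \<in> cball (\<phi> x0) \<rho>"
      using d(2)[of m] d(2)[of y] m(2) y(2) by (metis dist_commute less_imp_le mem_ball mem_cball min_less_iff_conj)+
    define e where "e = \<phi> y - \<phi> m"
    define w where "w = \<psi>' (\<phi> m) e"
    have "e \<in> L" using slice m y U subspace_L unfolding e_def by (auto intro: subspace_diff)
    then have w: "w \<in> tangent_space M m" using tangent_space_eq[OF m(1) U(1)] by (simp add: w_def)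
    have "\<phi>' m w = e" using phi'_psi'[of "\<phi> m" e] psi_phi U(1) \<rho>(2) cb(1) by (auto simp: w_def)
    then have "norm e \<le> P * norm w"
      using norm_blinfun[of "\<phi>' m" w] P(2)[of m] m(2) mult_right_mono[of _ P "norm w"]
      by (fastforce simp: dist_commute)
    moreover have "norm (y - m - w) \<le> 1 / (4 * P) * norm e"
      using \<rho>(3)[OF cb(1) cb(2)] psi_phi U by (simp add: e_def w_def)
    ultimately have "norm (y - m - w) \<le> 1 / (4 * P) * (P * norm w)"
      using P(1) by (smt (verit) divide_nonneg_nonneg mult_left_mono)
    then show ?thesis using w P(1) by auto
  qed
  then show ?thesis using r0(1) d(1) by (intro exI[of _ "min r0 d"]) auto
qed

end

lemma smooth_submanifold_subspace_tangent_space: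
  assumes "smooth_submanifold M" "m \<in> M"
  shows "subspace (tangent_space M m)"
proof -
  obtain U V L \<phi> \<psi> \<phi>' \<psi>' where "C1_slice_chart M U V L \<phi> \<psi> \<phi>' \<psi>'" "m \<in> U"
    using smooth_submanifold_chart[OF assms] .
  then show ?thesis using C1_slice_chart.subspace_tangent_space assms(2) by blast
qed

lemma compact_submanifold_chord_tangent:
  assumes M: "smooth_submanifold M" "compact M"
  obtains r where "r > 0"
    "\<And>m y. m \<in> M \<Longrightarrow> y \<in> M \<Longrightarrow> y \<noteq> m \<Longrightarrow> norm (y - m) < r \<Longrightarrow>
       \<exists>w\<in>tangent_space M m. w \<noteq> 0 \<and> norm (y - m) * norm w / 2 \<le> (y - m) \<bullet> w"
proof -
  have "\<forall>x0\<in>M. \<exists>r>0. \<forall>m\<in>M \<inter> ball x0 r. \<forall>y\<in>M \<inter> ball x0 r.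
          \<exists>w\<in>tangent_space M m. norm (y - m - w) \<le> norm w / 4"
  proof
    fix x0 assume x0: "x0 \<in> M"
    obtain U V L \<phi> \<psi> \<phi>' \<psi>' where "C1_slice_chart M U V L \<phi> \<psi> \<phi>' \<psi>'" "x0 \<in> U"
      using smooth_submanifold_chart[OF M(1) x0] .
    from C1_slice_chart.chord_near_tangent[OF this(1) x0 this(2)]
    show "\<exists>r>0. \<forall>m\<in>M \<inter> ball x0 r. \<forall>y\<in>M \<inter> ball x0 r.
          \<exists>w\<in>tangent_space M m. norm (y - m - w) \<le> norm w / 4" .
  qed
  from bchoice[OF this] obtain R where R: "\<forall>x0\<in>M. R x0 > 0 \<and> (\<forall>m\<in>M \<inter> ball x0 (R x0).
      \<forall>y\<in>M \<inter> ball x0 (R x0). \<exists>w\<in>tangent_space M m. norm (y - m - w) \<le> norm w / 4)" ..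
  have cover: "M \<subseteq> \<Union>((\<lambda>x. ball x (R x)) ` M)" using R by force
  have "\<And>G. G \<in> (\<lambda>x. ball x (R x)) ` M \<Longrightarrow> open G" by auto
  then obtain \<epsilon> where \<epsilon>: "\<epsilon> > 0" "\<And>x. x \<in> M \<Longrightarrow> \<exists>G\<in>(\<lambda>x. ball x (R x)) ` M. ball x \<epsilon> \<subseteq> G"
    using Heine_Borel_lemma[OF M(2) cover] by blast
  have "\<exists>w\<in>tangent_space M m. w \<noteq> 0 \<and> norm (y - m) * norm w / 2 \<le> (y - m) \<bullet> w"
    if m: "m \<in> M" and y: "y \<in> M" and ne: "y \<noteq> m" and close: "norm (y - m) < \<epsilon>" for m y
  proof -
    obtain x0 where "x0 \<in> M" "ball m \<epsilon> \<subseteq> ball x0 (R x0)" using \<epsilon>(2)[OF m] by blast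
    moreover have "m \<in> ball m \<epsilon>" "y \<in> ball m \<epsilon>"
      using \<epsilon>(1) close by (auto simp: dist_norm norm_minus_commute)
    ultimately obtain w where w: "w \<in> tangent_space M m" "norm (y - m - w) \<le> norm w / 4"
      using R m y by blast
    have "w \<noteq> 0" using w(2) ne by auto
    with w show ?thesis using inner_ge_half_norms by blast
  qed
  then show ?thesis using \<epsilon>(1) that by blast
qed

lemma mdiff_inner_tangent:
  assumes sub: "subspace (tangent_space M m)" and \<Phi>: "(\<Phi> has_derivative (\<lambda>h. g \<bullet> h)) (at m)"
  shows "mdiff M \<Phi> m \<in> tangent_space M m"
    and "\<And>w. w \<in> tangent_space M m \<Longrightarrow> mdiff M \<Phi> m \<bullet> w = g \<bullet> w"
proof -
  define T where "T = tangent_space M m"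
  have fd: "frechet_derivative \<Phi> (at m) = (\<lambda>h. g \<bullet> h)" using frechet_derivative_at[OF \<Phi>] by simp
  obtain y z where yT: "y \<in> T" and zT: "\<And>x. x \<in> T \<Longrightarrow> z \<bullet> x = 0" and g: "g = y + z"
    using orthogonal_subspace_decomp_exists[of T g]
    unfolding span_eq_iff[THEN iffD2, OF sub[folded T_def]] orthogonal_def by blast
  have gy: "g \<bullet> w = y \<bullet> w" if "w \<in> T" for w
    using zT[OF that] g by (simp add: inner_add_left)
  have "\<exists>!p. p \<in> T \<and> (\<forall>w\<in>T. frechet_derivative \<Phi> (at m) w = p \<bullet> w)"
  proof (rule ex1I[of _ y])
    show "y \<in> T \<and> (\<forall>w\<in>T. frechet_derivative \<Phi> (at m) w = y \<bullet> w)"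
      using yT gy by (simp add: fd)
  next
    fix p assume p: "p \<in> T \<and> (\<forall>w\<in>T. frechet_derivative \<Phi> (at m) w = p \<bullet> w)"
    then have "p - y \<in> T" using yT sub T_def by (simp add: subspace_diff)
    then have "p \<bullet> (p - y) = y \<bullet> (p - y)" using p gy by (simp add: fd)
    then have "(p - y) \<bullet> (p - y) = 0" by (simp add: inner_diff_left)
    then show "p = y" by simp
  qed
  then have "mdiff M \<Phi> m \<in> T \<and> (\<forall>w\<in>T. frechet_derivative \<Phi> (at m) w = mdiff M \<Phi> m \<bullet> w)"
    unfolding mdiff_def T_def[symmetric] by (rule theI')
  then show "mdiff M \<Phi> m \<in> tangent_space M m"
    and "\<And>w. w \<in> tangent_space M m \<Longrightarrow> mdiff M \<Phi> m \<bullet> w = g \<bullet> w"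
    unfolding T_def fd by simp_all
qed

text \<open>A smooth substitute for \<open>norm (y - c)\<close>, which is not differentiable at \<open>c\<close>.\<close>

definition reg_dist :: "real \<Rightarrow> 'a::real_inner \<Rightarrow> 'a \<Rightarrow> real" where
  "reg_dist \<epsilon> c y = sqrt ((norm (y - c))\<^sup>2 + \<epsilon>\<^sup>2)"

lemma reg_dist_bounds:
  assumes "\<epsilon> > 0"
  shows "norm (y - c) \<le> reg_dist \<epsilon> c y" and "\<epsilon> \<le> reg_dist \<epsilon> c y"
    and "reg_dist \<epsilon> c y \<le> norm (y - c) + \<epsilon>"
    and "\<epsilon> \<le> norm (y - c) \<Longrightarrow> reg_dist \<epsilon> c y \<le> 2 * norm (y - c)"
proof -
  show "norm (y - c) \<le> reg_dist \<epsilon> c y" "\<epsilon> \<le> reg_dist \<epsilon> c y"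
    unfolding reg_dist_def by (auto intro: real_le_rsqrt)
  show "reg_dist \<epsilon> c y \<le> norm (y - c) + \<epsilon>"
    unfolding reg_dist_def using assms by (intro real_le_lsqrt) (auto simp: power2_eq_square algebra_simps)
  assume "\<epsilon> \<le> norm (y - c)"
  then have "\<epsilon>\<^sup>2 \<le> (norm (y - c))\<^sup>2" using assms by (intro power_mono) auto
  then have "(norm (y - c))\<^sup>2 + \<epsilon>\<^sup>2 \<le> (2 * norm (y - c))\<^sup>2"
    by (simp add: power_mult_distrib) (use zero_le_power2[of "norm (y - c)"] in linarith)
  then show "reg_dist \<epsilon> c y \<le> 2 * norm (y - c)"
    unfolding reg_dist_def by (intro real_le_lsqrt) auto
qed

lemma has_derivative_reg_dist:
  assumes "\<epsilon> > 0"
  shows "(reg_dist \<epsilon> c has_derivative (\<lambda>h. ((y - c) /\<^sub>R reg_dist \<epsilon> c y) \<bullet> h)) (at y)"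
proof -
  define Q where "Q y = (y - c) \<bullet> (y - c) + \<epsilon>\<^sup>2" for y
  have Q: "Q y > 0" using assms by (simp add: Q_def add_nonneg_pos)
  have E: "reg_dist \<epsilon> c = (\<lambda>y. sqrt (Q y))"
    by (rule ext) (simp only: reg_dist_def Q_def power2_norm_eq_inner)
  have D: "((\<lambda>y. sqrt (Q y)) has_derivative
      (\<lambda>h. inverse (sqrt (Q y)) / 2 * (h \<bullet> (y - c) + (y - c) \<bullet> h))) (at y)"
    using Q unfolding Q_def by (auto intro!: derivative_eq_intros)
  have F: "(\<lambda>h. inverse (sqrt (Q y)) / 2 * (h \<bullet> (y - c) + (y - c) \<bullet> h))
      = (\<lambda>h. ((y - c) /\<^sub>R sqrt (Q y)) \<bullet> h)"
  proof
    fix h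
    have "h \<bullet> (y - c) + (y - c) \<bullet> h = 2 * ((y - c) \<bullet> h)" by (simp only: inner_commute[of h] mult_2)
    then show "inverse (sqrt (Q y)) / 2 * (h \<bullet> (y - c) + (y - c) \<bullet> h) = ((y - c) /\<^sub>R sqrt (Q y)) \<bullet> h"
      by simp
  qed
  show ?thesis unfolding E using D unfolding F .
qed

lemma has_derivative_neg_scaled_reg_dist:
  assumes "\<epsilon> > 0"
  shows "((\<lambda>y. - C * reg_dist \<epsilon> c y) has_derivative (\<lambda>h. ((C / reg_dist \<epsilon> c m) *\<^sub>R (c - m)) \<bullet> h)) (at m)"
proof -
  have "((\<lambda>y. - C * reg_dist \<epsilon> c y) has_derivative (\<lambda>h. - C * (((m - c) /\<^sub>R reg_dist \<epsilon> c m) \<bullet> h))) (at m)"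
    by (intro has_derivative_mult_right has_derivative_reg_dist assms)
  moreover have "- C * (((m - c) /\<^sub>R reg_dist \<epsilon> c m) \<bullet> h) = ((C / reg_dist \<epsilon> c m) *\<^sub>R (c - m)) \<bullet> h" for h
  proof -
    have "m - c = - (c - m)" by simp
    then show ?thesis by (simp only: inner_scaleR_left inner_minus_left) (simp add: inverse_eq_divide)
  qed
  ultimately show ?thesis by simp
qed

lemma Ck_on_1_reg_dist:
  assumes "\<epsilon> > 0"
  shows "Ck_on 1 UNIV (\<lambda>y. k * reg_dist \<epsilon> c y)"
proof -
  have "reg_dist \<epsilon> c y > 0" for y
    using reg_dist_bounds(2)[OF assms] assms by (rule order.strict_trans2[rotated])
  then have "continuous_on UNIV (\<lambda>y. (k *\<^sub>R ((y - c) /\<^sub>R reg_dist \<epsilon> c y)) \<bullet> w)" for w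
    unfolding reg_dist_def by (auto intro!: continuous_intros)
  moreover have "((\<lambda>y. k * reg_dist \<epsilon> c y) has_derivative (\<lambda>h. (k *\<^sub>R ((y - c) /\<^sub>R reg_dist \<epsilon> c y)) \<bullet> h)) (at y)" for y
    using has_derivative_reg_dist[OF assms] by (auto intro!: derivative_eq_intros)
  ultimately show ?thesis
    unfolding One_nat_def Ck_on.simps
    by (intro exI[of _ "\<lambda>y h. (k *\<^sub>R ((y - c) /\<^sub>R reg_dist \<epsilon> c y)) \<bullet> h"]) blast
qed

section \<open>The Hamiltonian and the contact estimate\<close>

lemma convex_on_subspace_growth:
  fixes f :: "'a::real_normed_vector \<Rightarrow> real"
  assumes T: "subspace T" and f: "convex_on T f" and f0: "f 0 \<le> c" "0 \<le> c" and K: "K > 0"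
    and sphere: "\<And>q. q \<in> T \<Longrightarrow> norm q = K \<Longrightarrow> c + 1 < f q"
    and p: "p \<in> T" "K \<le> norm p"
  shows "norm p / K < f p"
proof -
  define l where "l = K / norm p"
  have np: "norm p > 0" using K p(2) by linarith
  then have l: "0 < l" "l \<le> 1" using K p(2) by (auto simp: l_def)
  have "c + 1 < f (l *\<^sub>R p)"
    using sphere T p np K by (simp add: subspace_scale l_def)
  also have "f (l *\<^sub>R p) \<le> (1 - l) * f 0 + l * f p"
    using convex_onD[OF f, of l 0 p] l T p(1) by (simp add: subspace_0)
  also have "\<dots> \<le> c + l * f p"
    using f0 l mult_left_mono[OF f0(1), of "1 - l"] mult_left_le_one_le[OF f0(2), of "1 - l"] by simp
  finally have "1 < l * f p" by simp
  then show ?thesis using l np K by (simp add: l_def field_simps)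
qed

lemma zero_level_norm_bound:
  fixes H :: "'a::topological_space \<Rightarrow> 'b::real_normed_vector \<Rightarrow> real \<Rightarrow> real"
  assumes M: "compact M" and T: "\<And>x. x \<in> M \<Longrightarrow> subspace (T x)"
    and H1: "continuous_on {(x, p, u). x \<in> M \<and> p \<in> T x} (\<lambda>(x, p, u). H x p u)"
    and H2: "\<forall>R>0. \<exists>K>0. \<forall>x\<in>M. \<forall>p\<in>T x. \<forall>u. \<bar>u\<bar> \<le> R \<and> norm p \<ge> K \<longrightarrow> H x p u > R"
    and H3: "\<forall>x\<in>M. \<forall>u. convex_on (T x) (\<lambda>p. H x p u)"
    and H4: "\<exists>\<Lambda>>0. \<forall>x\<in>M. \<forall>p\<in>T x. \<forall>u w. \<bar>H x p u - H x p w\<bar> \<le> \<Lambda> * \<bar>u - w\<bar>"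
  obtains A B where "0 \<le> A" "0 \<le> B"
    "\<And>x p u. x \<in> M \<Longrightarrow> p \<in> T x \<Longrightarrow> H x p u = 0 \<Longrightarrow> norm p \<le> A + B * \<bar>u\<bar>"
proof -
  have "continuous_on M (\<lambda>x. (\<lambda>(x, p, u). H x p u) (x, 0::'b, 0::real))"
    by (rule continuous_on_compose2[OF H1]) (auto intro!: continuous_intros simp: T subspace_0)
  then have "bounded ((\<lambda>x. H x 0 0) ` M)"
    by (intro compact_imp_bounded compact_continuous_image M) simp
  then obtain c where c: "c > 0" "\<And>x. x \<in> M \<Longrightarrow> H x 0 0 \<le> c"
    unfolding bounded_pos by (auto simp: abs_le_iff)
  obtain K where K: "K > 0" "\<forall>x\<in>M. \<forall>p\<in>T x. \<forall>u. \<bar>u\<bar> \<le> c + 1 \<and> norm p \<ge> K \<longrightarrow> H x p u > c + 1"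
    using H2 c(1) by (metis add_pos_pos zero_less_one)
  obtain \<Lambda> where \<Lambda>: "\<Lambda> > 0" "\<forall>x\<in>M. \<forall>p\<in>T x. \<forall>u w. \<bar>H x p u - H x p w\<bar> \<le> \<Lambda> * \<bar>u - w\<bar>"
    using H4 by blast
  have "norm p \<le> K + K * \<Lambda> * \<bar>u\<bar>" if x: "x \<in> M" and p: "p \<in> T x" and H0: "H x p u = 0" for x p u
  proof (rule ccontr)
    assume "\<not> ?thesis"
    then have big: "K + K * \<Lambda> * \<bar>u\<bar> < norm p" by simp
    moreover have "0 \<le> K * \<Lambda> * \<bar>u\<bar>" using K \<Lambda> by simp
    ultimately have "K \<le> norm p" by linarith
    have grow: "norm p / K < H x p 0"
    proof (rule convex_on_subspace_growth[where f = "\<lambda>p. H x p 0"])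
      show "convex_on (T x) (\<lambda>p. H x p 0)" using H3 x by blast
      show "\<And>q. q \<in> T x \<Longrightarrow> norm q = K \<Longrightarrow> c + 1 < H x q 0" using K(2) x c(1) by force
    qed (use T x c K p \<open>K \<le> norm p\<close> in auto)
    have "1 + \<Lambda> * \<bar>u\<bar> < norm p / K" using big K(1) by (simp add: field_simps)
    moreover have "\<bar>H x p u - H x p 0\<bar> \<le> \<Lambda> * \<bar>u - 0\<bar>" using \<Lambda>(2) x p by blast
    ultimately show False using grow H0 by (simp add: abs_le_iff)
  qed
  then show ?thesis using K(1) \<Lambda>(1) by (intro that[of K "K * \<Lambda>"]) auto
qed

lemma BJ_solutionD:
  assumes "BJ_solution M H v" "open U" "M \<subseteq> U" "Ck_on 1 U \<Phi>" "x \<in> M" "v x = ereal a"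
    "\<And>y. y \<in> M \<Longrightarrow> v x - ereal (\<Phi> x) \<le> v y - ereal (\<Phi> y)"
  shows "H x (mdiff M \<Phi> x) a = 0"
  using assms(1)[unfolded BJ_solution_def, THEN conjunct2, THEN conjunct2, rule_format, of U \<Phi> x] assms(2-)
  by simp

lemma BJ_reg_dist_touching:
  fixes M :: "'a::euclidean_space set"
  assumes BJ: "BJ_solution M H v" and T: "subspace (tangent_space M m)"
    and HB: "\<And>p u. p \<in> tangent_space M m \<Longrightarrow> H m p u = 0 \<Longrightarrow> norm p \<le> A + B * \<bar>u\<bar>"
    and m: "m \<in> M" "v m = ereal a"
    and touch: "\<And>y. y \<in> M \<Longrightarrow>
      v m - ereal (- C * reg_dist \<epsilon> c m) \<le> v y - ereal (- C * reg_dist \<epsilon> c y)"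
    and \<epsilon>: "0 < \<epsilon>" "\<epsilon> \<le> norm (c - m)" and C: "0 \<le> C"
    and w: "w \<in> tangent_space M m" "w \<noteq> 0" "norm (c - m) * norm w / 2 \<le> (c - m) \<bullet> w"
  shows "C \<le> 4 * (A + B * \<bar>a\<bar>)"
proof -
  define \<Phi> where "\<Phi> y = - C * reg_dist \<epsilon> c y" for y
  define s where "s = reg_dist \<epsilon> c m"
  have s: "0 < s" "s \<le> 2 * norm (c - m)"
    using reg_dist_bounds(2,4)[OF \<epsilon>(1), where y = m and c = c] \<epsilon>
    by (auto simp: s_def norm_minus_commute)
  have "H m (mdiff M \<Phi> m) a = 0"
    using BJ_solutionD[OF BJ open_UNIV subset_UNIV _ m] Ck_on_1_reg_dist[OF \<epsilon>(1)] touch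
    unfolding \<Phi>_def by blast
  moreover have "(\<Phi> has_derivative (\<lambda>h. ((C / s) *\<^sub>R (c - m)) \<bullet> h)) (at m)"
    unfolding \<Phi>_def s_def by (rule has_derivative_neg_scaled_reg_dist[OF \<epsilon>(1)])
  note p = mdiff_inner_tangent[OF T this]
  ultimately have p_bound: "norm (mdiff M \<Phi> m) \<le> A + B * \<bar>a\<bar>" using HB p(1) by blast
  have half: "C / 2 \<le> C / s * norm (c - m)"
  proof -
    have "C / s * (s / 2) \<le> C / s * norm (c - m)" using s C by (intro mult_left_mono) auto
    then show ?thesis using s(1) by simp
  qed
  have "C / 4 * norm w = C / 2 * (norm w / 2)" by simp
  also have "\<dots> \<le> C / s * norm (c - m) * (norm w / 2)" using half by (rule mult_right_mono) simp
  also have "\<dots> = C / s * (norm (c - m) * norm w / 2)" by simp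
  also have "\<dots> \<le> C / s * ((c - m) \<bullet> w)" using w(3) s C by (intro mult_left_mono) auto
  also have "\<dots> = mdiff M \<Phi> m \<bullet> w" using p(2)[OF w(1)] by simp
  also have "\<dots> \<le> norm (mdiff M \<Phi> m) * norm w" by (rule norm_cauchy_schwarz)
  also have "\<dots> \<le> (A + B * \<bar>a\<bar>) * norm w" using p_bound by (rule mult_right_mono) simp
  finally show ?thesis using w(2) by simp
qed

section \<open>Lipschitz continuity of BJ solutions\<close>

locale BJ_lipschitz_setting =
  fixes M :: "'a::euclidean_space set" and H :: "'a \<Rightarrow> 'a \<Rightarrow> real \<Rightarrow> real" and v :: "'a \<Rightarrow> ereal"
    and A B r \<mu> :: real
  assumes BJ: "BJ_solution M H v" and compact_M: "compact M"
    and tangent_subspace: "\<And>m. m \<in> M \<Longrightarrow> subspace (tangent_space M m)"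
    and gradient_bound: "\<And>x p u. x \<in> M \<Longrightarrow> p \<in> tangent_space M x \<Longrightarrow> H x p u = 0 \<Longrightarrow>
      norm p \<le> A + B * \<bar>u\<bar>"
    and A_nonneg: "0 \<le> A" and B_nonneg: "0 \<le> B" and r_pos: "0 < r"
    and chord: "\<And>m y. m \<in> M \<Longrightarrow> y \<in> M \<Longrightarrow> y \<noteq> m \<Longrightarrow> norm (y - m) < r \<Longrightarrow>
      \<exists>w\<in>tangent_space M m. w \<noteq> 0 \<and> norm (y - m) * norm w / 2 \<le> (y - m) \<bullet> w"
    and lower: "\<And>y. y \<in> M \<Longrightarrow> ereal \<mu> \<le> v y"
begin

lemma reg_dist_minimizer:
  assumes \<epsilon>: "0 < \<epsilon>" and y1: "y1 \<in> M" "v y1 = ereal b"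
  obtains m a where "m \<in> M" "v m = ereal a" "\<mu> \<le> a"
    "\<And>y. y \<in> M \<Longrightarrow> v m - ereal (- C * reg_dist \<epsilon> c m) \<le> v y - ereal (- C * reg_dist \<epsilon> c y)"
    "a + C * reg_dist \<epsilon> c m \<le> b + C * reg_dist \<epsilon> c y1"
proof -
  have finite: "v y \<noteq> -\<infinity>" if "y \<in> M" for y using lower[OF that] by auto
  have "continuous_on M (\<lambda>y. - C * reg_dist \<epsilon> c y)" unfolding reg_dist_def by (intro continuous_intros)
  then have "lsc_on M (\<lambda>y. v y - ereal (- C * reg_dist \<epsilon> c y))"
    using lsc_on_diff_continuous BJ finite unfolding BJ_solution_def by blast
  then obtain m where m: "m \<in> M"
    and touch: "\<And>y. y \<in> M \<Longrightarrow> v m - ereal (- C * reg_dist \<epsilon> c m) \<le> v y - ereal (- C * reg_dist \<epsilon> c y)"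
    using lsc_on_attains_min compact_M y1(1) by blast
  then have "v m - ereal (- C * reg_dist \<epsilon> c m) \<le> ereal (b + C * reg_dist \<epsilon> c y1)" using y1 by force
  then obtain a where "v m = ereal a" "a + C * reg_dist \<epsilon> c m \<le> b + C * reg_dist \<epsilon> c y1"
    using finite[OF m] by (cases "v m") auto
  moreover have "\<mu> \<le> a" using lower[OF m] calculation(1) by simp
  ultimately show ?thesis using that m touch by blast
qed

lemma contact_bound:
  assumes m: "m \<in> M" "v m = ereal a" and y2: "y2 \<in> M"
    and touch: "\<And>y. y \<in> M \<Longrightarrow> v m - ereal (- C * reg_dist \<epsilon> y2 m) \<le> v y - ereal (- C * reg_dist \<epsilon> y2 y)"
    and \<epsilon>: "0 < \<epsilon>" "\<epsilon> \<le> norm (y2 - m)" and near: "norm (y2 - m) < r" and C: "0 \<le> C"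
  shows "C \<le> 4 * (A + B * \<bar>a\<bar>)"
proof -
  have "y2 \<noteq> m" using \<epsilon> by auto
  then obtain w where w: "w \<in> tangent_space M m" "w \<noteq> 0" "norm (y2 - m) * norm w / 2 \<le> (y2 - m) \<bullet> w"
    using chord m(1) y2 near by blast
  show ?thesis
    by (rule BJ_reg_dist_touching[OF BJ tangent_subspace[OF m(1)] gradient_bound[OF m(1)] m touch \<epsilon> C w])
qed

lemma minimum_near_center:
  assumes y1: "y1 \<in> M" "v y1 = ereal b" and y2: "y2 \<in> M"
    and \<epsilon>: "0 < \<epsilon>" "\<epsilon> \<le> \<delta>" and y12: "norm (y1 - y2) \<le> \<delta>"
    and \<delta>B: "16 * B * \<delta> \<le> 1" and \<delta>r: "4 * \<delta> < r"
    and C1: "8 * (A + B * (\<bar>\<mu>\<bar> + \<bar>b\<bar>)) < C" and C2: "2 * (\<bar>b\<bar> + \<bar>\<mu>\<bar>) < C * r"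
  shows "\<exists>m\<in>M. norm (m - y2) < \<epsilon> \<and> v m \<le> ereal (b + C * norm (y1 - y2))"
proof -
  define S where "S = reg_dist \<epsilon> y2"
  note S_bounds = reg_dist_bounds[OF \<epsilon>(1), where c = y2, folded S_def]
  have C: "0 < C" using C1 A_nonneg B_nonneg by (smt (verit) mult_nonneg_nonneg)
  obtain m a where m: "m \<in> M" "v m = ereal a" and \<mu>a: "\<mu> \<le> a"
    and touch: "\<And>y. y \<in> M \<Longrightarrow> v m - ereal (- C * S m) \<le> v y - ereal (- C * S y)"
    and ineq: "a + C * S m \<le> b + C * S y1"
    using reg_dist_minimizer[OF \<epsilon>(1) y1] unfolding S_def by blast
  have S_y1: "C * S y1 \<le> C * norm (y1 - y2) + C * \<epsilon>" and "C * \<epsilon> \<le> C * S m"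
    using mult_left_mono[OF S_bounds(3), of C] mult_left_mono[OF S_bounds(2), of C] C
    by (auto simp: algebra_simps)
  then have a_bound: "a \<le> b + C * norm (y1 - y2)" using ineq by linarith
  have "norm (m - y2) < \<epsilon>"
  proof (rule ccontr)
    assume "\<not> ?thesis"
    then have far: "\<epsilon> \<le> norm (y2 - m)" by (simp add: norm_minus_commute)
    have C\<delta>: "C * norm (y1 - y2) \<le> C * \<delta>" "C * \<epsilon> \<le> C * \<delta>" "4 * (C * \<delta>) < C * r"
      using y12 \<epsilon> C mult_strict_left_mono[OF \<delta>r C] by (simp_all add: ac_simps)
    have "C * norm (y2 - m) \<le> C * S m"
      using mult_left_mono[OF S_bounds(1), of C] C by (simp add: norm_minus_commute)
    also have "\<dots> < C * r"
      using ineq S_y1 C\<delta> \<mu>a C2 abs_ge_self[of b] abs_ge_minus_self[of \<mu>] by argo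
    finally have "norm (y2 - m) < r" using C by simp
    then have "C \<le> 4 * (A + B * \<bar>a\<bar>)"
      using contact_bound[OF m y2 touch[unfolded S_def] \<epsilon>(1) far] C by simp
    moreover have "\<bar>a\<bar> \<le> \<bar>\<mu>\<bar> + \<bar>b\<bar> + C * \<delta>"
      using a_bound \<mu>a C\<delta>(1) C \<epsilon> abs_ge_self[of b] abs_ge_minus_self[of \<mu>] abs_ge_self[of \<mu>]
        abs_ge_zero[of b] zero_less_mult_iff[of C \<delta>]
      unfolding abs_le_iff[of a] by argo
    then have "B * \<bar>a\<bar> \<le> B * (\<bar>\<mu>\<bar> + \<bar>b\<bar>) + B * (C * \<delta>)"
      using mult_left_mono[OF _ B_nonneg] by (metis distrib_left)
    moreover have "B * (C * \<delta>) \<le> C / 16" using mult_left_mono[OF \<delta>B, of C] C by (simp add: algebra_simps)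
    ultimately show False using C1 C by argo
  qed
  then show ?thesis using m a_bound by auto
qed

lemma upper_bound_near:
  assumes x: "x \<in> M" "v x = ereal b" and y: "y \<in> M" "dist x y \<le> \<delta>"
    and \<delta>: "0 < \<delta>" "16 * B * \<delta> \<le> 1" "4 * \<delta> < r"
    and C1: "8 * (A + B * (\<bar>\<mu>\<bar> + \<bar>b\<bar>)) < C" and C2: "2 * (\<bar>b\<bar> + \<bar>\<mu>\<bar>) < C * r"
  shows "v y \<le> ereal (b + C * dist x y)"
proof (rule ccontr)
  assume "\<not> ?thesis"
  then have "ereal (b + C * dist x y) < v y" by simp
  moreover have "lsc_on M v" using BJ unfolding BJ_solution_def by blast
  ultimately obtain e where e: "e > 0" "\<forall>y'\<in>M. dist y' y < e \<longrightarrow> ereal (b + C * dist x y) < v y'"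
    using y(1) unfolding lsc_on_def by blast
  have "0 < min e \<delta>" "min e \<delta> \<le> \<delta>" "norm (x - y) \<le> \<delta>" using e(1) \<delta>(1) y(2) by (auto simp: dist_norm)
  from minimum_near_center[OF x y(1) this \<delta>(2,3) C1 C2]
  obtain m where "m \<in> M" "norm (m - y) < min e \<delta>" "v m \<le> ereal (b + C * dist x y)"
    by (auto simp: dist_norm)
  then show False using e(2) by (auto simp: dist_norm)
qed

lemma local_upper_bound:
  "\<exists>\<delta>>0. \<forall>\<beta>. \<exists>C\<ge>0. \<forall>x\<in>M. \<forall>y\<in>M. \<forall>b. \<bar>b\<bar> \<le> \<beta> \<longrightarrow> v x = ereal b \<longrightarrow>
     dist x y \<le> \<delta> \<longrightarrow> v y \<le> ereal (b + C * dist x y)"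
proof -
  define \<delta> where "\<delta> = min (1 / (16 * B + 1)) (r / 8)"
  have \<delta>: "0 < \<delta>" "16 * B * \<delta> \<le> 1" "4 * \<delta> < r"
  proof -
    show "0 < \<delta>" using r_pos B_nonneg by (simp add: \<delta>_def)
    have "16 * B * \<delta> \<le> 16 * B * (1 / (16 * B + 1))"
      using B_nonneg by (intro mult_left_mono) (auto simp: \<delta>_def)
    also have "\<dots> \<le> 1" using B_nonneg by (simp add: field_simps)
    finally show "16 * B * \<delta> \<le> 1" .
    show "4 * \<delta> < r" using r_pos by (simp add: \<delta>_def)
  qed
  have "\<exists>C\<ge>0. \<forall>x\<in>M. \<forall>y\<in>M. \<forall>b. \<bar>b\<bar> \<le> \<beta> \<longrightarrow> v x = ereal b \<longrightarrow> dist x y \<le> \<delta> \<longrightarrow>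
      v y \<le> ereal (b + C * dist x y)" for \<beta>
  proof -
    define C where "C = 8 * (A + B * (\<bar>\<mu>\<bar> + \<bar>\<beta>\<bar>)) + 2 * (\<bar>\<beta>\<bar> + \<bar>\<mu>\<bar>) / r + 1"
    have C_ge: "2 * (\<bar>\<beta>\<bar> + \<bar>\<mu>\<bar>) / r + 1 \<le> C" "0 \<le> C"
      using A_nonneg B_nonneg r_pos by (simp_all add: C_def)
    have C1: "8 * (A + B * (\<bar>\<mu>\<bar> + \<bar>b\<bar>)) < C" if "\<bar>b\<bar> \<le> \<beta>" for b
    proof -
      have "B * (\<bar>\<mu>\<bar> + \<bar>b\<bar>) \<le> B * (\<bar>\<mu>\<bar> + \<bar>\<beta>\<bar>)" using that B_nonneg by (intro mult_left_mono) auto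
      moreover have "0 \<le> 2 * (\<bar>\<beta>\<bar> + \<bar>\<mu>\<bar>) / r" using r_pos by simp
      ultimately show ?thesis unfolding C_def by argo
    qed
    have C2: "2 * (\<bar>b\<bar> + \<bar>\<mu>\<bar>) < C * r" if "\<bar>b\<bar> \<le> \<beta>" for b
    proof -
      have "(2 * (\<bar>\<beta>\<bar> + \<bar>\<mu>\<bar>) / r + 1) * r \<le> C * r" using C_ge r_pos by (intro mult_right_mono) auto
      moreover have "(2 * (\<bar>\<beta>\<bar> + \<bar>\<mu>\<bar>) / r + 1) * r = 2 * (\<bar>\<beta>\<bar> + \<bar>\<mu>\<bar>) + r"
        using r_pos by (simp add: field_simps)
      ultimately show ?thesis using that r_pos abs_ge_self[of \<beta>] by argo
    qed
    have "v y \<le> ereal (b + C * dist x y)"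
      if "x \<in> M" "v x = ereal b" "\<bar>b\<bar> \<le> \<beta>" "y \<in> M" "dist x y \<le> \<delta>" for x y b
      using upper_bound_near \<delta> C1 C2 that by blast
    then show ?thesis using C_ge(2) by blast
  qed
  then show ?thesis using \<delta>(1) by blast
qed

end

theorem corollary6p2:
  fixes M :: "'a::euclidean_space set"
    and H :: "'a \<Rightarrow> 'a \<Rightarrow> real \<Rightarrow> real"
    and v :: "'a \<Rightarrow> ereal"
    and z :: 'a
  assumes M: "closed_riemannian_manifold M"
    and H1: "continuous_on {(x, p, u). x \<in> M \<and> p \<in> tangent_space M x} (\<lambda>(x, p, u). H x p u)"
    and H2: "\<forall>R>0. \<exists>K>0. \<forall>x\<in>M. \<forall>p\<in>tangent_space M x. \<forall>u.
               \<bar>u\<bar> \<le> R \<and> norm p \<ge> K \<longrightarrow> H x p u > R"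
    and H3: "\<forall>x\<in>M. \<forall>u. convex_on (tangent_space M x) (\<lambda>p. H x p u)"
    and H4: "\<exists>\<Lambda>>0. \<forall>x\<in>M. \<forall>p\<in>tangent_space M x. \<forall>u w.
               \<bar>H x p u - H x p w\<bar> \<le> \<Lambda> * \<bar>u - w\<bar>"
    and lsc: "lsc_on M v"
    and ran: "\<forall>x\<in>M. v x \<noteq> -\<infinity>"
    and BJ: "BJ_solution M H v"
    and z: "z \<in> M" "v z \<noteq> \<infinity>"
  shows "(\<forall>x\<in>M. v x \<noteq> \<infinity>) \<and> (\<exists>C. C\<ge>0 \<and> C-lipschitz_on M (\<lambda>x. real_of_ereal (v x)))"
proof -
  have compact: "compact M" and conn: "connected M" and sub: "smooth_submanifold M" and "M \<noteq> {}"
    using M unfolding closed_riemannian_manifold_def by auto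
  have tangent: "\<And>m. m \<in> M \<Longrightarrow> subspace (tangent_space M m)"
    using smooth_submanifold_subspace_tangent_space[OF sub] .
  obtain A B where AB: "0 \<le> A" "0 \<le> B"
      "\<And>x p u. x \<in> M \<Longrightarrow> p \<in> tangent_space M x \<Longrightarrow> H x p u = 0 \<Longrightarrow> norm p \<le> A + B * \<bar>u\<bar>"
    using zero_level_norm_bound[OF compact tangent H1 H2 H3 H4] by blast
  obtain r where r: "0 < r" "\<And>m y. m \<in> M \<Longrightarrow> y \<in> M \<Longrightarrow> y \<noteq> m \<Longrightarrow> norm (y - m) < r \<Longrightarrow>
      \<exists>w\<in>tangent_space M m. w \<noteq> 0 \<and> norm (y - m) * norm w / 2 \<le> (y - m) \<bullet> w"
    using compact_submanifold_chord_tangent[OF sub compact] by blast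
  obtain m where m: "m \<in> M" "\<And>y. y \<in> M \<Longrightarrow> v m \<le> v y"
    using lsc_on_attains_min[OF lsc compact \<open>M \<noteq> {}\<close>] by blast
  then obtain \<mu> where "v m = ereal \<mu>" using ran z by (cases "v m") force+
  then interpret BJ_lipschitz_setting M H v A B r \<mu>
    using BJ compact tangent AB r m by unfold_locales auto
  from local_upper_bound obtain \<delta> where "0 < \<delta>" "\<forall>\<beta>. \<exists>C\<ge>0. \<forall>x\<in>M. \<forall>y\<in>M. \<forall>b. \<bar>b\<bar> \<le> \<beta> \<longrightarrow>
      v x = ereal b \<longrightarrow> dist x y \<le> \<delta> \<longrightarrow> v y \<le> ereal (b + C * dist x y)"
    by blast
  then show ?thesis using ereal_lipschitz_if_local_upper_bound[where v = v, OF compact conn z lower] by blast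
qed

end
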